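(* Let $N\ge 2$ and $R\ge 3$, and let $S=\lfloor R/3\rfloor$. For every randomized online algorithm for routing in the Clos network $C_{N,R}$, there is a sequence of flows, each with demand $1$ (and satisfying the demand assumption below), for which the expected congestion of the routing returned by the algorithm is at least $2-\tfrac{1}{2^S}$.
   Context: Clos network $C_{N,R}$: a directed graph with $N$ middle switches $M_1,\dots,M_N$, $R$ input switches $I_1,\dots,I_R$, $R$ output switches $O_1,\dots,O_R$, source servers $s_i^k$ and destination servers $t_i^k$ ($i\in[R]$, $k\in[N]$), and edges $s_i^kI_i$, $I_iM_m$, $M_mO_i$, $O_it_i^k$ for all $i\in[R]$, $m,k\in[N]$; all links have capacity $1$. A flow $f$ has a source server $s(f)$ of input switch $I_{i(f)}$, a destination server $t(f)$ of output switch $O_{j(f)}$, and a positive demand $\mathrm{dem}(f)$; a set of flows must have total demand at most $1$ leaving each source server and entering each destination server. A routing $r$ assigns each flow a single middle switch $r(f)\in[N]$; its congestion is $\max_{i\in[R],m\in[N]}\max\{\sum_{f:i(f)=i,r(f)=m}\mathrm{dem}(f),\ \sum_{f:j(f)=i,r(f)=m}\mathrm{dem}(f)\}$. A deterministic online algorithm defines a routing for every sequence of flows such that for every prefix $P$ of a sequence $F$, the routing of $P$ when given $P$ equals the routing of $P$ when given $F$. A randomized online algorithm is a probability distribution over deterministic online algorithms. *)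

theory Defs
  imports "HOL-Probability.Probability"
begin

text \<open>Indices are 0-based: input/output switches 0..<R, middle switches and
server indices 0..<N.\<close>

datatype flow = Flow (src_sw: nat) (src_idx: nat) (dst_sw: nat) (dst_idx: nat) (dem: real)

definition valid_flow :: "nat \<Rightarrow> nat \<Rightarrow> flow \<Rightarrow> bool" where
  "valid_flow N R f \<longleftrightarrow> src_sw f < R \<and> src_idx f < N \<and> dst_sw f < R \<and> dst_idx f < N \<and> dem f > 0"

definition valid_seq :: "nat \<Rightarrow> nat \<Rightarrow> flow list \<Rightarrow> bool" where
  "valid_seq N R F \<longleftrightarrow> (\<forall>f\<in>set F. valid_flow N R f)
     \<and> (\<forall>i<R. \<forall>k<N. sum_list (map dem (filter (\<lambda>f. src_sw f = i \<and> src_idx f = k) F)) \<le> 1)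
     \<and> (\<forall>j<R. \<forall>k<N. sum_list (map dem (filter (\<lambda>f. dst_sw f = j \<and> dst_idx f = k) F)) \<le> 1)"

text \<open>A routing of F: the l-th flow is routed through middle switch r ! l.\<close>
definition is_routing :: "nat \<Rightarrow> flow list \<Rightarrow> nat list \<Rightarrow> bool" where
  "is_routing N F r \<longleftrightarrow> length r = length F \<and> (\<forall>m\<in>set r. m < N)"

definition load_in :: "flow list \<Rightarrow> nat list \<Rightarrow> nat \<Rightarrow> nat \<Rightarrow> real" where
  "load_in F r i m = (\<Sum>l | l < length F \<and> src_sw (F ! l) = i \<and> r ! l = m. dem (F ! l))"

definition load_out :: "flow list \<Rightarrow> nat list \<Rightarrow> nat \<Rightarrow> nat \<Rightarrow> real" where
  "load_out F r j m = (\<Sum>l | l < length F \<and> dst_sw (F ! l) = j \<and> r ! l = m. dem (F ! l))"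

definition congestion :: "nat \<Rightarrow> nat \<Rightarrow> flow list \<Rightarrow> nat list \<Rightarrow> real" where
  "congestion N R F r = Max {max (load_in F r i m) (load_out F r i m) | i m. i < R \<and> m < N}"

definition det_online :: "nat \<Rightarrow> nat \<Rightarrow> (flow list \<Rightarrow> nat list) \<Rightarrow> bool" where
  "det_online N R A \<longleftrightarrow> (\<forall>F. valid_seq N R F \<longrightarrow>
      is_routing N F (A F) \<and> (\<forall>n. A (take n F) = take n (A F)))"

definition rand_online :: "nat \<Rightarrow> nat \<Rightarrow> 'a measure \<Rightarrow> ('a \<Rightarrow> flow list \<Rightarrow> nat list) \<Rightarrow> bool" where
  "rand_online N R M Alg \<longleftrightarrow> prob_space M
     \<and> (\<forall>w\<in>space M. det_online N R (Alg w))
     \<and> (\<forall>F. valid_seq N R F \<longrightarrow> (\<lambda>w. Alg w F) \<in> measurable M (count_space UNIV))"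

end

theory Submission
  imports Defs "HOL-Library.Sublist"
begin

(* The adversary uses S = R div 3 phases; phase k touches only the switches with indices
   3k, 3k+1, 3k+2.  It first sends N-1 unit flows I_3k -> O_3k+1 and N-1 unit flows
   I_3k+1 -> O_3k+2.  A routing of congestion 1 must put each block on N-1 distinct middle
   switches, leaving exactly one switch m1 free at I_3k and one switch m2 free at I_3k+1 and
   at O_3k+2.  The phase then ends either with one flow I_3k -> O_3k+2, which forces m1 = m2,
   or with flows I_3k -> O_3k and I_3k+1 -> O_3k, which force m1 ~= m2.  An online algorithm
   fixes m1 and m2 before seeing the ending, so in each of its runs at most one of the 2^S
   sequences of endings is routed with congestion 1, while all others have congestion at least 2.
   Averaging over the 2^S sequences gives one whose expected congestion is at least
   (2 * 2^S - 1) / 2^S. *)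

lemma finite_congestion_candidates:
  "finite {max (load_in F r i m) (load_out F r i m) | i m. i < R \<and> m < N}"
  by (rule finite_image_set2) auto

lemma load_le_congestion:
  assumes "i < R" "m < N"
  shows "load_in F r i m \<le> congestion N R F r" "load_out F r i m \<le> congestion N R F r"
proof -
  have "max (load_in F r i m) (load_out F r i m) \<le> congestion N R F r"
    unfolding congestion_def by (rule Max_ge[OF finite_congestion_candidates]) (use assms in blast)
  then show "load_in F r i m \<le> congestion N R F r" "load_out F r i m \<le> congestion N R F r"
    by simp_all
qed

lemma sum_dem_le_load_in:
  assumes "\<forall>f\<in>set F. valid_flow N R f"
    and "L \<subseteq> {l. l < length F \<and> src_sw (F ! l) = i \<and> r ! l = m}"
  shows "(\<Sum>l\<in>L. dem (F ! l)) \<le> load_in F r i m"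
  unfolding load_in_def
  by (rule sum_mono2) (use assms in \<open>auto simp: valid_flow_def less_imp_le\<close>)

lemma sum_dem_le_load_out:
  assumes "\<forall>f\<in>set F. valid_flow N R f"
    and "L \<subseteq> {l. l < length F \<and> dst_sw (F ! l) = j \<and> r ! l = m}"
  shows "(\<Sum>l\<in>L. dem (F ! l)) \<le> load_out F r j m"
  unfolding load_out_def
  by (rule sum_mono2) (use assms in \<open>auto simp: valid_flow_def less_imp_le\<close>)

lemma congestion_nonneg:
  assumes "\<forall>f\<in>set F. valid_flow N R f" "0 < N" "0 < R"
  shows "0 \<le> congestion N R F r"
proof -
  have "(\<Sum>l\<in>{}. dem (F ! l)) \<le> load_in F r 0 0"
    by (rule sum_dem_le_load_in) (use assms in auto)
  also have "\<dots> \<le> congestion N R F r"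
    by (rule load_le_congestion) (use assms in auto)
  finally show ?thesis by simp
qed

lemma congestion_le_sum_dem:
  assumes "\<forall>f\<in>set F. valid_flow N R f" "0 < N" "0 < R"
  shows "congestion N R F r \<le> sum_list (map dem F)"
  unfolding congestion_def
proof (rule Max.boundedI[OF finite_congestion_candidates])
  show "{max (load_in F r i m) (load_out F r i m) | i m. i < R \<and> m < N} \<noteq> {}"
    using assms by blast
next
  have total: "sum_list (map dem F) = (\<Sum>l\<in>{..<length F}. dem (F ! l))"
    by (simp add: sum_list_sum_nth atLeast0LessThan)
  fix c assume "c \<in> {max (load_in F r i m) (load_out F r i m) | i m. i < R \<and> m < N}"
  then obtain i m where c: "c = max (load_in F r i m) (load_out F r i m)" by blast
  have "load_in F r i m \<le> sum_list (map dem F)" "load_out F r i m \<le> sum_list (map dem F)"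
    unfolding total load_in_def load_out_def
    by (auto intro!: sum_mono2 simp: less_imp_le assms(1)[unfolded valid_flow_def])
  then show "c \<le> sum_list (map dem F)" unfolding c by simp
qed

definition shares_switch :: "flow \<Rightarrow> flow \<Rightarrow> bool" where
  "shares_switch f g \<longleftrightarrow> src_sw f = src_sw g \<or> dst_sw f = dst_sw g"

definition conflict_free :: "flow list \<Rightarrow> nat list \<Rightarrow> bool" where
  "conflict_free F r \<longleftrightarrow> (\<forall>l1<length F. \<forall>l2<length F.
     l1 \<noteq> l2 \<longrightarrow> shares_switch (F ! l1) (F ! l2) \<longrightarrow> r ! l1 \<noteq> r ! l2)"

lemma one_le_congestion:
  assumes "\<forall>f\<in>set F. valid_flow N R f" "\<forall>f\<in>set F. dem f = 1"
    and "is_routing N F r" "F \<noteq> []"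
  shows "1 \<le> congestion N R F r"
proof -
  let ?i = "src_sw (F ! 0)" and ?m = "r ! 0"
  have in_range: "?i < R" "?m < N"
    using assms nth_mem[of 0 F] nth_mem[of 0 r] unfolding is_routing_def valid_flow_def by auto
  have "(\<Sum>l\<in>{0}. dem (F ! l)) \<le> load_in F r ?i ?m"
    by (rule sum_dem_le_load_in) (use assms in auto)
  also have "\<dots> \<le> congestion N R F r"
    by (rule load_le_congestion) (use in_range in auto)
  finally show ?thesis using assms(2,4) by simp
qed

lemma two_le_congestion:
  assumes "\<forall>f\<in>set F. valid_flow N R f" "\<forall>f\<in>set F. dem f = 1"
    and "is_routing N F r" "\<not> conflict_free F r"
  shows "2 \<le> congestion N R F r"
proof -
  obtain l1 l2 where l: "l1 < length F" "l2 < length F" "l1 \<noteq> l2"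
    and shared: "shares_switch (F ! l1) (F ! l2)" and same: "r ! l1 = r ! l2"
    using assms(4) unfolding conflict_free_def by blast
  let ?m = "r ! l1"
  have m: "?m < N" using assms(3) l(1) nth_mem[of l1 r] unfolding is_routing_def by auto
  have pair: "(\<Sum>l\<in>{l1, l2}. dem (F ! l)) = 2" using assms(2) l by simp
  show ?thesis
  proof (cases "src_sw (F ! l1) = src_sw (F ! l2)")
    case True
    let ?i = "src_sw (F ! l1)"
    have i: "?i < R" using assms(1) l(1) unfolding valid_flow_def by auto
    have "(\<Sum>l\<in>{l1, l2}. dem (F ! l)) \<le> load_in F r ?i ?m"
      by (rule sum_dem_le_load_in) (use assms(1) l True same in auto)
    also have "\<dots> \<le> congestion N R F r" by (rule load_le_congestion) (use i m in auto)
    finally show ?thesis unfolding pair .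
  next
    case False
    let ?j = "dst_sw (F ! l1)"
    have j: "?j < R" using assms(1) l(1) unfolding valid_flow_def by auto
    have "(\<Sum>l\<in>{l1, l2}. dem (F ! l)) \<le> load_out F r ?j ?m"
      by (rule sum_dem_le_load_out)
        (use assms(1) l False shared same in \<open>auto simp: shares_switch_def\<close>)
    also have "\<dots> \<le> congestion N R F r" by (rule load_le_congestion) (use j m in auto)
    finally show ?thesis unfolding pair .
  qed
qed

lemma conflict_free_inj_on:
  assumes "conflict_free F r" "L \<subseteq> {..<length F}"
    and "\<forall>l\<in>L. \<forall>l'\<in>L. shares_switch (F ! l) (F ! l')"
  shows "inj_on ((!) r) L"
  using assms unfolding conflict_free_def inj_on_def by blast

lemma conflict_free_notin_image:
  assumes "conflict_free F r" "l < length F" "L \<subseteq> {..<length F}" "l \<notin> L"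
    and "\<forall>l'\<in>L. shares_switch (F ! l) (F ! l')"
  shows "r ! l \<notin> (!) r ` L"
  using assms unfolding conflict_free_def by fastforce

lemma conflict_free_segment:
  assumes "conflict_free (P @ X @ Q) r" "length r = length (P @ X @ Q)"
  shows "conflict_free X (take (length X) (drop (length P) r))"
  unfolding conflict_free_def
proof (intro allI impI)
  fix l1 l2 assume l: "l1 < length X" "l2 < length X" "l1 \<noteq> l2"
    and "shares_switch (X ! l1) (X ! l2)"
  then have "shares_switch ((P @ X @ Q) ! (length P + l1)) ((P @ X @ Q) ! (length P + l2))"
    by (simp add: nth_append)
  then have "r ! (length P + l1) \<noteq> r ! (length P + l2)"
    using assms(1) l unfolding conflict_free_def by auto
  then show "take (length X) (drop (length P) r) ! l1 \<noteq> take (length X) (drop (length P) r) ! l2"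
    using assms(2) l by simp
qed

lemma is_routing_segment:
  assumes "is_routing N (P @ X @ Q) r"
  shows "is_routing N X (take (length X) (drop (length P) r))"
  using assms unfolding is_routing_def by (auto dest: in_set_takeD in_set_dropD)

lemma det_online_take_eq:
  assumes "det_online N R A" "valid_seq N R F" "valid_seq N R F'" "take n F = take n F'"
  shows "take n (A F) = take n (A F')"
  using assms unfolding det_online_def by metis

lemma lessThan_Diff_eq_singleton:
  assumes "V \<subseteq> {..<N}" "card V = N - 1" "0 < N"
  obtains m where "{..<N} - V = {m}"
proof -
  have "card ({..<N} - V) = 1"
    using assms by (simp add: card_Diff_subset finite_subset)
  then show ?thesis using that card_1_singletonE by blast
qed

definition phase :: "nat \<Rightarrow> nat \<Rightarrow> bool \<Rightarrow> flow list" where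
  "phase N k b =
     map (\<lambda>j. Flow (3*k) j (3*k+1) j 1) [0..<N-1] @
     map (\<lambda>j. Flow (3*k+1) j (3*k+2) j 1) [0..<N-1] @
     (if b then [Flow (3*k) (N-1) (3*k+2) (N-1) 1]
      else [Flow (3*k) (N-1) (3*k) 0 1, Flow (3*k+1) (N-1) (3*k) 1 1])"

lemma length_phase: "length (phase N k b) = 2 * (N - 1) + (if b then 1 else 2)"
  unfolding phase_def by simp

lemma nth_phase:
  "l < n \<Longrightarrow> phase (Suc n) k b ! l = Flow (3*k) l (3*k+1) l 1"
  "n \<le> l \<Longrightarrow> l < 2 * n \<Longrightarrow> phase (Suc n) k b ! l = Flow (3*k+1) (l - n) (3*k+2) (l - n) 1"
  "phase (Suc n) k True ! (2 * n) = Flow (3*k) n (3*k+2) n 1"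
  "phase (Suc n) k False ! (2 * n) = Flow (3*k) n (3*k) 0 1"
  "phase (Suc n) k False ! Suc (2 * n) = Flow (3*k+1) n (3*k) 1 1"
  unfolding phase_def by (auto simp: nth_append)

lemma phase_not_both_conflict_free:
  assumes routing: "is_routing N (phase N k True) s" "is_routing N (phase N k False) s'"
    and conflict_free: "conflict_free (phase N k True) s" "conflict_free (phase N k False) s'"
    and common: "take (2 * (N - 1)) s = take (2 * (N - 1)) s'"
  shows False
proof -
  have "0 < N"
    using routing(1) unfolding is_routing_def phase_def by (cases s) auto
  then obtain n where N: "N = Suc n" by (cases N) auto
  let ?T = "phase N k True"
  define B1 B2 where "B1 = {..<n}" and "B2 = {n..<2 * n}"
  have s_lt: "s ! l < N" if "l \<le> 2 * n" for l
    using routing(1) that nth_mem[of l s] unfolding is_routing_def N by (auto simp: length_phase)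
  have s'_lt: "s' ! l < N" if "l \<le> Suc (2 * n)" for l
    using routing(2) that nth_mem[of l s'] unfolding is_routing_def N by (auto simp: length_phase)
  have block_free: "\<exists>m. {..<N} - (!) s ` B = {m}"
    if B: "B \<subseteq> {..<2 * n}" "card B = n" "\<forall>l\<in>B. \<forall>l'\<in>B. shares_switch (?T ! l) (?T ! l')"
    for B
  proof -
    have "inj_on ((!) s) B"
      by (rule conflict_free_inj_on[OF conflict_free(1)]) (use B in \<open>auto simp: N length_phase\<close>)
    then have "card ((!) s ` B) = N - 1" using B(2) N by (simp add: card_image)
    moreover have "(!) s ` B \<subseteq> {..<N}" using B(1) s_lt by force
    ultimately obtain m where "{..<N} - (!) s ` B = {m}"
      using lessThan_Diff_eq_singleton N by blast
    then show ?thesis ..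
  qed
  have B_props: "B1 \<subseteq> {..<2 * n}" "card B1 = n" "B2 \<subseteq> {..<2 * n}" "card B2 = n"
    unfolding B1_def B2_def by auto
  have "\<forall>l\<in>B1. \<forall>l'\<in>B1. shares_switch (?T ! l) (?T ! l')"
    unfolding B1_def N by (simp add: nth_phase shares_switch_def)
  then obtain m1 where m1: "{..<N} - (!) s ` B1 = {m1}"
    using block_free[OF B_props(1,2)] by blast
  have "\<forall>l\<in>B2. \<forall>l'\<in>B2. shares_switch (?T ! l) (?T ! l')"
    unfolding B2_def N by (simp add: nth_phase shares_switch_def)
  then obtain m2 where m2: "{..<N} - (!) s ` B2 = {m2}"
    using block_free[OF B_props(3,4)] by blast
  have "s ! (2 * n) \<notin> (!) s ` B1"
    by (rule conflict_free_notin_image[OF conflict_free(1)])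
      (simp_all add: B1_def N length_phase nth_phase shares_switch_def subset_iff)
  then have "s ! (2 * n) = m1" using m1 s_lt[OF le_refl] by (metis DiffI lessThan_iff singletonD)
  have "s ! (2 * n) \<notin> (!) s ` B2"
    by (rule conflict_free_notin_image[OF conflict_free(1)])
      (simp_all add: B2_def N length_phase nth_phase shares_switch_def subset_iff)
  then have "s ! (2 * n) = m2" using m2 s_lt[OF le_refl] by (metis DiffI lessThan_iff singletonD)
  have same_blocks: "(!) s' ` B1 = (!) s ` B1" "(!) s' ` B2 = (!) s ` B2"
    using common B_props(1,3) unfolding N by (metis diff_Suc_1 image_cong lessThan_iff nth_take subsetD)+
  have "s' ! (2 * n) \<notin> (!) s' ` B1"
    by (rule conflict_free_notin_image[OF conflict_free(2)])
      (simp_all add: B1_def N length_phase nth_phase shares_switch_def subset_iff)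
  then have "s' ! (2 * n) = m1"
    using m1 s'_lt[OF le_SucI[OF le_refl]] unfolding same_blocks by (metis DiffI lessThan_iff singletonD)
  have "s' ! (Suc (2 * n)) \<notin> (!) s' ` B2"
    by (rule conflict_free_notin_image[OF conflict_free(2)])
      (simp_all add: B2_def N length_phase nth_phase shares_switch_def subset_iff)
  then have "s' ! (Suc (2 * n)) = m2"
    using m2 s'_lt[OF le_refl] unfolding same_blocks by (metis DiffI lessThan_iff singletonD)
  moreover have "s' ! (2 * n) \<noteq> s' ! (Suc (2 * n))"
    using conflict_free(2) unfolding conflict_free_def N
    by (simp add: length_phase nth_phase shares_switch_def)
  ultimately show False
    using \<open>s ! (2 * n) = m1\<close> \<open>s ! (2 * n) = m2\<close> \<open>s' ! (2 * n) = m1\<close> by simp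
qed

lemma online_not_both_conflict_free:
  assumes "det_online N R A"
    and valid: "valid_seq N R (P @ phase N k True @ Q)" "valid_seq N R (P @ phase N k False @ Q')"
    and "conflict_free (P @ phase N k True @ Q) (A (P @ phase N k True @ Q))"
    and "conflict_free (P @ phase N k False @ Q') (A (P @ phase N k False @ Q'))"
  shows False
proof -
  define F F' r r' where "F = P @ phase N k True @ Q" and "F' = P @ phase N k False @ Q'"
    and "r = A F" and "r' = A F'"
  let ?p = "length P" and ?c = "2 * (N - 1)"
  define s s' where "s = take (length (phase N k True)) (drop ?p r)"
    and "s' = take (length (phase N k False)) (drop ?p r')"
  have routing: "is_routing N F r" "is_routing N F' r'"
    using assms(1) valid unfolding det_online_def F_def F'_def r_def r'_def by blast+
  have "take (?p + ?c) F = take (?p + ?c) F'"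
    unfolding F_def F'_def phase_def by simp
  then have "take (?p + ?c) r = take (?p + ?c) r'"
    unfolding r_def r'_def using det_online_take_eq assms(1) valid F_def F'_def by blast
  then have "take ?c s = take ?c s'"
    unfolding s_def s'_def by (simp add: take_drop length_phase add.commute min_def)
  moreover have "is_routing N (phase N k True) s" "is_routing N (phase N k False) s'"
    using is_routing_segment routing unfolding s_def s'_def F_def F'_def by blast+
  moreover have "conflict_free (phase N k True) s" "conflict_free (phase N k False) s'"
    using conflict_free_segment assms(4,5) routing
    unfolding s_def s'_def F_def F'_def r_def r'_def is_routing_def by blast+
  ultimately show False using phase_not_both_conflict_free by blast
qed

fun phases :: "nat \<Rightarrow> nat \<Rightarrow> bool list \<Rightarrow> flow list" where
  "phases N k [] = []"
| "phases N k (b # bs) = phase N k b @ phases N (Suc k) bs"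

lemma phases_append: "phases N k (xs @ ys) = phases N k xs @ phases N (k + length xs) ys"
  by (induction xs arbitrary: k) auto

lemma phases_eq_Nil_iff: "phases N k bs = [] \<longleftrightarrow> bs = []"
  by (cases bs) (simp_all add: phase_def)

lemma flow_in_phase:
  assumes "f \<in> set (phase N k b)" "2 \<le> N"
  shows "dem f = 1 \<and> src_idx f < N \<and> dst_idx f < N
    \<and> 3 * k \<le> src_sw f \<and> src_sw f < 3 * k + 3 \<and> 3 * k \<le> dst_sw f \<and> dst_sw f < 3 * k + 3"
  using assms unfolding phase_def by (cases b) auto

lemma flow_in_phases:
  assumes "f \<in> set (phases N k bs)" "2 \<le> N"
  shows "dem f = 1 \<and> src_idx f < N \<and> dst_idx f < N
    \<and> 3 * k \<le> src_sw f \<and> src_sw f < 3 * (k + length bs)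
    \<and> 3 * k \<le> dst_sw f \<and> dst_sw f < 3 * (k + length bs)"
  using assms
proof (induction bs arbitrary: k)
  case (Cons b bs)
  then show ?case using flow_in_phase[of f N k b] Cons.IH[of "Suc k"] by auto
qed simp

definition src_server :: "flow \<Rightarrow> nat \<times> nat" where
  "src_server f = (src_sw f, src_idx f)"

definition dst_server :: "flow \<Rightarrow> nat \<times> nat" where
  "dst_server f = (dst_sw f, dst_idx f)"

lemma distinct_servers_phase:
  assumes "2 \<le> N"
  shows "distinct (map src_server (phase N k b)) \<and> distinct (map dst_server (phase N k b))"
proof -
  obtain n where "N = Suc (Suc n)" using assms by (metis add_2_eq_Suc le_Suc_ex)
  then show ?thesis unfolding phase_def src_server_def dst_server_def
    by (cases b) (auto simp: distinct_map inj_on_def)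
qed

lemma distinct_servers_phases:
  assumes "2 \<le> N"
  shows "distinct (map src_server (phases N k bs)) \<and> distinct (map dst_server (phases N k bs))"
proof (induction bs arbitrary: k)
  case (Cons b bs)
  have "f \<in> set (phase N k b) \<Longrightarrow> g \<in> set (phases N (Suc k) bs) \<Longrightarrow>
      src_server f \<noteq> src_server g \<and> dst_server f \<noteq> dst_server g" for f g
    using flow_in_phase[of f N k b] flow_in_phases[of g N "Suc k" bs] assms
    unfolding src_server_def dst_server_def by auto
  then show ?case
    using Cons.IH[of "Suc k"] distinct_servers_phase[OF assms, of k b] by fastforce
qed simp

lemma sum_list_filter_key_le_one:
  fixes h :: "'b \<Rightarrow> real"
  assumes "distinct (map g xs)" "\<forall>x\<in>set xs. h x \<le> 1"
  shows "sum_list (map h (filter (\<lambda>x. g x = y) xs)) \<le> 1"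
  using assms
proof (induction xs)
  case (Cons a xs)
  show ?case
  proof (cases "g a = y")
    case True
    then have "filter (\<lambda>x. g x = y) xs = []"
      using Cons.prems(1) by (auto simp: filter_empty_conv image_iff)
    then show ?thesis using True Cons.prems(2) by simp
  qed (use Cons in simp)
qed simp

lemma valid_seq_if_distinct_servers:
  assumes "\<forall>f\<in>set F. valid_flow N R f \<and> dem f \<le> 1"
    and "distinct (map src_server F)" "distinct (map dst_server F)"
  shows "valid_seq N R F"
proof -
  have "sum_list (map dem (filter (\<lambda>f. src_server f = (i, k)) F)) \<le> 1"
    "sum_list (map dem (filter (\<lambda>f. dst_server f = (i, k)) F)) \<le> 1" for i k
    using sum_list_filter_key_le_one[of src_server F dem] sum_list_filter_key_le_one[of dst_server F dem]
      assms by simp_all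
  then show ?thesis using assms(1) unfolding valid_seq_def src_server_def dst_server_def by simp
qed

lemma valid_seq_phases:
  assumes "2 \<le> N" "3 * length bs \<le> R"
  shows "valid_seq N R (phases N 0 bs)"
proof (rule valid_seq_if_distinct_servers)
  show "\<forall>f\<in>set (phases N 0 bs). valid_flow N R f \<and> dem f \<le> 1"
    using flow_in_phases[of _ N 0 bs] assms unfolding valid_flow_def by force
qed (use distinct_servers_phases[OF assms(1)] in blast)+

lemma unit_demand_phases: "2 \<le> N \<Longrightarrow> \<forall>f\<in>set (phases N k bs). dem f = 1"
  using flow_in_phases by blast

lemma conflict_free_phases_unique:
  assumes "2 \<le> N" "det_online N R A" "3 * length xs \<le> R" "length ys = length xs"
    and "conflict_free (phases N 0 xs) (A (phases N 0 xs))"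
    and "conflict_free (phases N 0 ys) (A (phases N 0 ys))"
  shows "xs = ys"
proof (rule ccontr)
  assume "xs \<noteq> ys"
  with assms(4) have "xs \<parallel> ys"
    by (auto simp: parallel_def prefix_def)
  then obtain p a u c v where "a \<noteq> c" and xs: "xs = p @ a # u" and ys: "ys = p @ c # v"
    by (elim parallel_decomp[elim_format] exE conjE) (rule that)
  let ?P = "phases N 0 p" and ?k = "length p"
  have split: "phases N 0 xs = ?P @ phase N ?k a @ phases N (Suc ?k) u"
    "phases N 0 ys = ?P @ phase N ?k c @ phases N (Suc ?k) v"
    unfolding xs ys by (simp_all add: phases_append)
  have valid:
    "valid_seq N R (?P @ phase N ?k a @ phases N (Suc ?k) u)"
    "valid_seq N R (?P @ phase N ?k c @ phases N (Suc ?k) v)"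
    using valid_seq_phases[of N xs R] valid_seq_phases[of N ys R] assms(1,3,4)
    unfolding split by simp_all
  have conflict_free:
    "conflict_free (?P @ phase N ?k a @ phases N (Suc ?k) u) (A (?P @ phase N ?k a @ phases N (Suc ?k) u))"
    "conflict_free (?P @ phase N ?k c @ phases N (Suc ?k) v) (A (?P @ phase N ?k c @ phases N (Suc ?k) v))"
    using assms(5,6) unfolding split .
  consider "a = True" "c = False" | "a = False" "c = True" using \<open>a \<noteq> c\<close> by auto
  then show False
  proof cases
    case 1
    show False
      using online_not_both_conflict_free[OF assms(2) valid[unfolded 1] conflict_free[unfolded 1]] .
  next
    case 2
    show False
      using online_not_both_conflict_free[OF assms(2)
          valid(2,1)[unfolded 2] conflict_free(2,1)[unfolded 2]] .
  qed
qed

lemma sum_ge_two_card_minus_one: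
  fixes f :: "'b \<Rightarrow> real"
  assumes "finite L" "\<forall>x\<in>L. 1 \<le> f x" "\<forall>x\<in>L - {y}. 2 \<le> f x"
  shows "2 * real (card L) - 1 \<le> sum f L"
proof (cases "y \<in> L")
  case True
  have "real (card (L - {y})) * 2 \<le> sum f (L - {y})"
    using sum_bounded_below[of "L - {y}" 2 f] assms(3) by simp
  moreover have "card (L - {y}) = card L - 1" "1 \<le> card L" "1 \<le> f y"
    using True assms(1,2) by (auto simp: card_gt_0_iff Suc_le_eq)
  ultimately show ?thesis
    using sum.remove[OF assms(1) True, of f] by simp
next
  case False
  then show ?thesis
    using sum_bounded_below[of L 2 f] assms(3) by simp
qed

lemma finite_bool_lists_length: "finite {bs :: bool list. length bs = n}"
  using finite_lists_length_eq[of "UNIV :: bool set" n] by simp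

lemma card_bool_lists_length: "card {bs :: bool list. length bs = n} = 2 ^ n"
  using card_lists_length_eq[of "UNIV :: bool set" n] by simp

lemma sum_congestion_phases_ge:
  assumes "2 \<le> N" "det_online N R A" "3 * S \<le> R" "0 < S"
  shows "2 * 2 ^ S - 1 \<le>
    (\<Sum>bs | length bs = S. congestion N R (phases N 0 bs) (A (phases N 0 bs)))"
proof -
  define L where "L = {bs :: bool list. length bs = S}"
  define g where "g bs = congestion N R (phases N 0 bs) (A (phases N 0 bs))" for bs
  have card_L: "card L = 2 ^ S" and finite_L: "finite L"
    unfolding L_def by (rule card_bool_lists_length, rule finite_bool_lists_length)
  have facts: "valid_seq N R (phases N 0 bs)" "\<forall>f\<in>set (phases N 0 bs). valid_flow N R f"
    "\<forall>f\<in>set (phases N 0 bs). dem f = 1" "is_routing N (phases N 0 bs) (A (phases N 0 bs))"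
    if "bs \<in> L" for bs
    using that valid_seq_phases[of N bs R] unit_demand_phases[of N 0 bs] assms(1,2,3)
    unfolding L_def valid_seq_def det_online_def by auto
  have unique: "bs = bs'"
    if "bs \<in> L" "bs' \<in> L" "conflict_free (phases N 0 bs) (A (phases N 0 bs))"
      "conflict_free (phases N 0 bs') (A (phases N 0 bs'))" for bs bs'
    using conflict_free_phases_unique[OF assms(1,2), of bs bs'] assms(3) that unfolding L_def by simp
  obtain y where y: "\<forall>bs\<in>L. conflict_free (phases N 0 bs) (A (phases N 0 bs)) \<longrightarrow> bs = y"
    using unique by blast
  have "1 \<le> g bs" if "bs \<in> L" for bs
    unfolding g_def
  proof (rule one_le_congestion[OF facts(2-4)[OF that]])
    show "phases N 0 bs \<noteq> []" using that assms(4) unfolding L_def phases_eq_Nil_iff by auto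
  qed
  moreover have "2 \<le> g bs" if "bs \<in> L - {y}" for bs
    unfolding g_def using that y by (intro two_le_congestion[OF facts(2-4)]) auto
  ultimately have "2 * real (card L) - 1 \<le> sum g L"
    using sum_ge_two_card_minus_one[OF finite_L] by blast
  then show ?thesis unfolding card_L g_def L_def[symmetric] by simp
qed

lemma (in prob_space) exists_integral_ge_average:
  fixes g :: "'i \<Rightarrow> 'a \<Rightarrow> real"
  assumes "finite L" "L \<noteq> {}" "\<forall>i\<in>L. integrable M (g i)"
    and "\<forall>w\<in>space M. B \<le> (\<Sum>i\<in>L. g i w)"
  shows "\<exists>i\<in>L. B / card L \<le> (\<integral>w. g i w \<partial>M)"
proof (rule ccontr)
  assume "\<not> ?thesis"
  then have "(\<Sum>i\<in>L. \<integral>w. g i w \<partial>M) < (\<Sum>i\<in>L. B / card L)"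
    using assms(1,2) by (intro sum_strict_mono) auto
  also have "\<dots> = B" using assms(1,2) by simp
  also have "B \<le> (\<integral>w. (\<Sum>i\<in>L. g i w) \<partial>M)"
    using assms(3,4) by (intro integral_ge_const AE_I2) auto
  also have "\<dots> = (\<Sum>i\<in>L. \<integral>w. g i w \<partial>M)"
    using assms(3) by (intro Bochner_Integration.integral_sum) auto
  finally show False by simp
qed

lemma integrable_congestion:
  assumes "rand_online N R M Alg" "valid_seq N R F" "0 < N" "0 < R"
  shows "integrable M (\<lambda>w. congestion N R F (Alg w F))"
proof -
  interpret prob_space M using assms(1) unfolding rand_online_def by blast
  have flows: "\<forall>f\<in>set F. valid_flow N R f" using assms(2) unfolding valid_seq_def by blast
  have "(\<lambda>w. congestion N R F (Alg w F)) = congestion N R F \<circ> (\<lambda>w. Alg w F)" by auto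
  moreover have "(\<lambda>w. Alg w F) \<in> measurable M (count_space UNIV)"
    using assms(1,2) unfolding rand_online_def by blast
  ultimately have "(\<lambda>w. congestion N R F (Alg w F)) \<in> borel_measurable M" by simp
  moreover have "norm (congestion N R F r) \<le> sum_list (map dem F)" for r
    using congestion_nonneg[OF flows assms(3,4)] congestion_le_sum_dem[OF flows assms(3,4)]
    by simp
  ultimately show ?thesis by (intro integrable_const_bound[where B = "sum_list (map dem F)"]) auto
qed

theorem mainTheorem6:
  fixes N R :: nat and M :: "'a measure" and Alg :: "'a \<Rightarrow> flow list \<Rightarrow> nat list"
  assumes "N \<ge> 2" and "R \<ge> 3"
    and "rand_online N R M Alg"
  shows "\<exists>F. valid_seq N R F \<and> (\<forall>f\<in>set F. dem f = 1)
           \<and> (\<integral>w. congestion N R F (Alg w F) \<partial>M) \<ge> 2 - 1 / 2 ^ (R div 3)"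
proof -
  interpret prob_space M using assms(3) unfolding rand_online_def by blast
  define S where "S = R div 3"
  have S: "0 < S" "3 * S \<le> R" using assms(2) unfolding S_def by auto
  define L where "L = {bs :: bool list. length bs = S}"
  define cong where "cong bs w = congestion N R (phases N 0 bs) (Alg w (phases N 0 bs))" for bs w
  have finite: "finite L" and card: "card L = 2 ^ S"
    unfolding L_def by (rule finite_bool_lists_length, rule card_bool_lists_length)
  then have nonempty: "L \<noteq> {}" by auto
  have valid: "valid_seq N R (phases N 0 bs)" if "bs \<in> L" for bs
    using valid_seq_phases assms(1) S(2) that unfolding L_def by simp
  have integrable: "\<forall>bs\<in>L. integrable M (cong bs)"
    unfolding cong_def using integrable_congestion[OF assms(3) valid] assms(1,2) by simp
  have bound: "\<forall>w\<in>space M. 2 * 2 ^ S - 1 \<le> (\<Sum>bs\<in>L. cong bs w)"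
    using sum_congestion_phases_ge assms(1,3) S unfolding rand_online_def L_def cong_def by blast
  obtain bs where "bs \<in> L" and "(2 * 2 ^ S - 1) / card L \<le> (\<integral>w. cong bs w \<partial>M)"
    using exists_integral_ge_average[OF finite nonempty integrable bound] ..
  moreover have "(2 * 2 ^ S - 1) / card L = (2 - 1 / 2 ^ S :: real)"
    unfolding card by (simp add: field_simps)
  ultimately show ?thesis
    using valid[OF \<open>bs \<in> L\<close>] unit_demand_phases[OF assms(1)] unfolding S_def cong_def by metis
qed

end
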